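(* Let $\mathcal{M}=\{(x,y,z):x^2+y^2=1\}$ be the cylinder, let $G'$ be a $(2,2)$-sparse graph on vertices $v_1,\dots,v_n$ such that $v_1,\dots,v_4$ induce a proper subgraph isomorphic to $K_4$, and let $p=(p_1,\dots,p_n)\in\mathcal{M}^n$. Let $p^k=(p_1,p_2^k,p_3^k,p_4^k,p_5,\dots,p_n)\in\mathcal{M}^n$, $k=1,2,\dots$, with $p_i^k\to p_1$ as $k\to\infty$ for $i=2,3,4$, and suppose that (i) for each $k$ the framework $(K_4,(p_1,p_2^k,p_3^k,p_4^k))$ has a $2$-dimensional space of infinitesimal flexes on $\mathcal{M}$, and (ii) for each $k$ the space of infinitesimal flexes of $(G',p^k)$ on $\mathcal{M}$ has dimension greater than $2$. Then, with $p^\infty=(p_1,p_1,p_1,p_1,p_5,\dots,p_n)$, there is an infinitesimal flex $u'$ of $(G',p^\infty)$ on $\mathcal{M}$ of unit Euclidean norm of the form $u'=(0,0,0,0,u_5,\dots,u_n)$.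
   Context: A graph is $(2,2)$-sparse if every subgraph $H$ with at least one edge satisfies $|E(H)|\le 2|V(H)|-2$. For a graph with vertices $v_1,\dots,v_n$ and a (possibly degenerate, i.e. with coincident points) vector $q=(q_1,\dots,q_n)\in\mathcal{M}^n$, an infinitesimal flex of the framework $(G,q)$ on $\mathcal{M}$ is $u=(u_1,\dots,u_n)\in(\mathbb{R}^3)^n$ with each $u_i$ tangent to $\mathcal{M}$ at $q_i$ (i.e. $u_i\cdot N(q_i)=0$, where $N(q)=(2x,2y,0)$ at $q=(x,y,z)$) and $(u_i-u_j)\cdot(q_i-q_j)=0$ for every edge $v_iv_j$; equivalently $u$ lies in the kernel of the rigidity matrix $R_{\mathcal{M}}(G,q)$. *)

theory Defs
  imports "HOL-Analysis.Analysis" "HOL-Library.Numeral_Type"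
begin

definition simple_graph :: "'n set set \<Rightarrow> bool" where
  "simple_graph E \<longleftrightarrow> (\<forall>e\<in>E. card e = 2)"

definition sparse22 :: "('n::finite) set set \<Rightarrow> bool" where
  "sparse22 E \<longleftrightarrow>
     (\<forall>V F. F \<subseteq> E \<and> F \<noteq> {} \<and> (\<forall>e\<in>F. e \<subseteq> V) \<longrightarrow> card F + 2 \<le> 2 * card V)"

definition cylinder :: "(real^3) set" where
  "cylinder = {q. (q$1)\<^sup>2 + (q$2)\<^sup>2 = 1}"

definition cyl_normal :: "real^3 \<Rightarrow> real^3" where
  "cyl_normal q = vector [2 * q$1, 2 * q$2, 0]"

definition inf_flexes :: "('n::finite) set set \<Rightarrow> real^3^'n \<Rightarrow> (real^3^'n) set" where
  "inf_flexes E q = {u. (\<forall>i. u$i \<bullet> cyl_normal (q$i) = 0) \<and>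
                        (\<forall>i j. {i,j} \<in> E \<longrightarrow> (u$i - u$j) \<bullet> (q$i - q$j) = 0)}"

definition K4_edges :: "4 set set" where
  "K4_edges = {{i,j} | i j. i \<noteq> j}"

end

theory Submission
  imports Defs
begin

text \<open>For each k, the flexes of (G', p^k) vanishing on the K4 form the kernel of the restriction
  to the K4, which maps a space of dimension > 2 into one of dimension 2; so there is a unit flex
  vanishing on the K4. The unit sphere is compact and the flex conditions are closed in the pair
  (flex, configuration), so a subsequential limit of these flexes is a unit flex of the collapsed
  configuration p^\<infinity>, still vanishing on the K4.\<close>

lemma exists_unit_in_kernel_if_dim_less:
  fixes f :: "'a::euclidean_space \<Rightarrow> 'b::euclidean_space"
  assumes "linear f" and "subspace S" and "f ` S \<subseteq> T" and "dim T < dim S"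
  shows "\<exists>u\<in>S. norm u = 1 \<and> f u = 0"
proof (rule ccontr)
  assume no_unit: "\<not> ?thesis"
  have "u = 0" if "u \<in> S" "f u = 0" for u
  proof (rule ccontr)
    assume "u \<noteq> 0"
    then have "norm (u /\<^sub>R norm u) = 1" by simp
    moreover have "u /\<^sub>R norm u \<in> S" using \<open>subspace S\<close> \<open>u \<in> S\<close> by (simp add: subspace_scale)
    moreover have "f (u /\<^sub>R norm u) = 0" using \<open>linear f\<close> \<open>f u = 0\<close> by (simp add: linear_scale)
    ultimately show False using no_unit by blast
  qed
  then have "inj_on f (span S)"
    using assms(1,2) by (simp add: span_eq_iff[THEN iffD2] linear_inj_on_iff_eq_0)
  then have "dim (f ` S) = dim S" by (rule dim_image_eq[OF \<open>linear f\<close>])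
  moreover have "dim (f ` S) \<le> dim T" using \<open>f ` S \<subseteq> T\<close> by (rule dim_subset)
  ultimately show False using \<open>dim T < dim S\<close> by simp
qed

lemma subspace_inf_flexes: "subspace (inf_flexes E q)"
  unfolding subspace_def inf_flexes_def
  by (simp add: add_diff_add inner_add_left flip: scaleR_diff_right)

lemma inf_flexes_restrict_K4:
  fixes \<phi> :: "4 \<Rightarrow> 'n::finite"
  assumes "\<forall>i j. i \<noteq> j \<longrightarrow> {\<phi> i, \<phi> j} \<in> E" and "u \<in> inf_flexes E q"
  shows "(\<chi> j. u $ \<phi> j) \<in> inf_flexes K4_edges (\<chi> j. q $ \<phi> j)"
  using assms unfolding inf_flexes_def K4_edges_def by (auto simp: doubleton_eq_iff)

lemma exists_unit_flex_vanishing_on_K4: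
  fixes \<phi> :: "4 \<Rightarrow> 'n::finite" and q :: "real^3^'n"
  assumes "\<forall>i j. i \<noteq> j \<longrightarrow> {\<phi> i, \<phi> j} \<in> E"
    and "dim (inf_flexes K4_edges (\<chi> j. q $ \<phi> j)) < dim (inf_flexes E q)"
  shows "\<exists>u \<in> inf_flexes E q. norm u = 1 \<and> (\<forall>j. u $ \<phi> j = 0)"
proof -
  define restrict where "restrict = (\<lambda>u::real^3^'n. (\<chi> j. u $ \<phi> j) :: real^3^4)"
  have "linear restrict" unfolding restrict_def by (intro linearI) (auto simp: vec_eq_iff)
  moreover have "restrict ` inf_flexes E q \<subseteq> inf_flexes K4_edges (\<chi> j. q $ \<phi> j)"
    using inf_flexes_restrict_K4[OF assms(1)] unfolding restrict_def by blast
  ultimately obtain u where "u \<in> inf_flexes E q" "norm u = 1" "restrict u = 0"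
    using exists_unit_in_kernel_if_dim_less[OF _ subspace_inf_flexes] assms(2) by metis
  then show ?thesis unfolding restrict_def by (auto simp: vec_eq_iff)
qed

lemma inner_cyl_normal: "u \<bullet> cyl_normal q = 2 * (u $ 1 * q $ 1 + u $ 2 * q $ 2)"
  unfolding cyl_normal_def inner_vec_def by (simp add: sum_3 algebra_simps)

lemma inf_flexes_closed_under_limits:
  assumes flex: "\<And>k. u k \<in> inf_flexes E (q k)"
    and "u \<longlonglongrightarrow> v" and "q \<longlonglongrightarrow> p"
  shows "v \<in> inf_flexes E p"
proof -
  have limit_zero: "L = 0" if "(\<lambda>k. 0::real) \<longlonglongrightarrow> L" for L
    using that LIMSEQ_const_iff by metis
  have u: "(\<lambda>k. u k $ i) \<longlonglongrightarrow> v $ i" and q: "(\<lambda>k. q k $ i) \<longlonglongrightarrow> p $ i" for i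
    using assms(2,3) by (auto intro: tendsto_vec_nth)
  have "v $ i \<bullet> cyl_normal (p $ i) = 0" for i
  proof -
    have "(\<lambda>k. u k $ i \<bullet> cyl_normal (q k $ i)) \<longlonglongrightarrow> v $ i \<bullet> cyl_normal (p $ i)"
      unfolding inner_cyl_normal by (intro tendsto_intros u q)
    with flex show ?thesis unfolding inf_flexes_def by (auto intro: limit_zero)
  qed
  moreover have "(v $ i - v $ j) \<bullet> (p $ i - p $ j) = 0" if "{i, j} \<in> E" for i j
  proof -
    have "(\<lambda>k. (u k $ i - u k $ j) \<bullet> (q k $ i - q k $ j)) \<longlonglongrightarrow> (v $ i - v $ j) \<bullet> (p $ i - p $ j)"
      by (intro tendsto_intros u q)
    with flex that show ?thesis unfolding inf_flexes_def by (auto intro: limit_zero)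
  qed
  ultimately show ?thesis unfolding inf_flexes_def by blast
qed

lemma collapsing_configurations_tendsto:
  fixes \<phi> :: "4 \<Rightarrow> 'n::finite" and pk :: "nat \<Rightarrow> real^3^'n"
  assumes "\<forall>k. pk k $ \<phi> 1 = p $ \<phi> 1"
    and "\<forall>k i. i \<notin> range \<phi> \<longrightarrow> pk k $ i = p $ i"
    and "\<forall>j\<in>{2,3,4}. (\<lambda>k. pk k $ \<phi> j) \<longlonglongrightarrow> p $ \<phi> 1"
  shows "pk \<longlonglongrightarrow> (\<chi> i. if i \<in> range \<phi> then p $ \<phi> 1 else p $ i)"
proof (rule vec_tendstoI)
  fix i
  have "(\<lambda>k. pk k $ \<phi> j) \<longlonglongrightarrow> p $ \<phi> 1" for j
    using exhaust_4[of j] assms(1,3) by auto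
  then show "(\<lambda>k. pk k $ i) \<longlonglongrightarrow> (\<chi> i. if i \<in> range \<phi> then p $ \<phi> 1 else p $ i) $ i"
    using assms(2) by auto
qed

theorem lemma5p2:
  fixes E :: "('n::finite) set set"
    and \<phi> :: "4 \<Rightarrow> 'n"
    and p :: "real^3^'n"
    and pk :: "nat \<Rightarrow> real^3^'n"
  assumes simple: "simple_graph E"
    and sparse: "sparse22 E"
    and phi_inj: "inj \<phi>"
    and K4_sub: "\<forall>i j. i \<noteq> j \<longrightarrow> {\<phi> i, \<phi> j} \<in> E"
    and proper: "range \<phi> \<noteq> UNIV"
    and p_on: "\<forall>i. p$i \<in> cylinder"
    and pk_on: "\<forall>k i. pk k $ i \<in> cylinder"
    and pk_fix1: "\<forall>k. pk k $ \<phi> 1 = p $ \<phi> 1"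
    and pk_fix: "\<forall>k i. i \<notin> range \<phi> \<longrightarrow> pk k $ i = p $ i"
    and pk_lim: "\<forall>j\<in>{2,3,4}. (\<lambda>k. pk k $ \<phi> j) \<longlonglongrightarrow> p $ \<phi> 1"
    and K4_flex: "\<forall>k. dim (inf_flexes K4_edges (\<chi> j. pk k $ \<phi> j)) = 2"
    and G_flex: "\<forall>k. dim (inf_flexes E (pk k)) > 2"
  shows "\<exists>u \<in> inf_flexes E (\<chi> i. if i \<in> range \<phi> then p $ \<phi> 1 else p $ i).
           norm u = 1 \<and> (\<forall>j. u $ \<phi> j = 0)"
proof -
  have "\<forall>k. \<exists>w \<in> inf_flexes E (pk k). norm w = 1 \<and> (\<forall>j. w $ \<phi> j = 0)"
    using exists_unit_flex_vanishing_on_K4[OF K4_sub] K4_flex G_flex by auto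
  then obtain w where w: "\<And>k. w k \<in> inf_flexes E (pk k)" "\<And>k. norm (w k) = 1"
    "\<And>k j. w k $ \<phi> j = 0"
    by metis
  have "\<forall>k. w k \<in> sphere 0 1" using w(2) by simp
  with compact_imp_seq_compact[OF compact_sphere]
  obtain u r where u: "u \<in> sphere 0 1" and "strict_mono r" and wr: "(w \<circ> r) \<longlonglongrightarrow> u"
    by (rule seq_compactE)
  have pkr: "(pk \<circ> r) \<longlonglongrightarrow> (\<chi> i. if i \<in> range \<phi> then p $ \<phi> 1 else p $ i)"
    using LIMSEQ_subseq_LIMSEQ[OF collapsing_configurations_tendsto[OF pk_fix1 pk_fix pk_lim]]
      \<open>strict_mono r\<close> .
  have "u \<in> inf_flexes E (\<chi> i. if i \<in> range \<phi> then p $ \<phi> 1 else p $ i)"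
    by (rule inf_flexes_closed_under_limits[OF _ wr pkr]) (simp add: w(1))
  moreover have "u $ \<phi> j = 0" for j
    using LIMSEQ_unique[OF tendsto_vec_nth[OF wr]] w(3) by (simp add: o_def)
  ultimately show ?thesis using u by auto
qed

end
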